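(* Let $\tilde w,\tilde w'\in\tilde W^+_1$, let $\lambda\in X^*(T)$ be dominant and $\nu\in X^*(T)$. If $t_\nu w_0 t_\lambda \tilde w\le w_0t_\lambda\tilde w'$ and $t_{-\nu}w_0t_\lambda\tilde w'\le w_0t_\lambda\tilde w$, then $\nu\in X^0(T)$ and $\tilde w'=t_\nu\tilde w$.
   Context: Let $G$ be a split connected reductive group with maximal split torus $T$ and Borel $B\supset T$; $X^*(T)$, roots $\Phi$, positive roots $\Phi^+$, simple roots $\Delta$, coroots $\alpha^\vee$, Weyl group $W$ with longest element $w_0$, root lattice $\Lambda_R$. $X^0(T)=\{\lambda\in X^*(T):\langle\lambda,\alpha^\vee\rangle=0\ \forall\alpha\in\Delta\}$; $\lambda$ is dominant if $\langle\lambda,\alpha^\vee\rangle\ge0$ for all $\alpha\in\Delta$. $\tilde W = X^*(T)\rtimes W$ (translations $t_\nu$), $W_a = \Lambda_R\rtimes W$, acting on $V=X^*(T)\otimes\mathbb{R}$ by $t_\nu w(x)=w(x)+\nu$. Alcoves are connected components of $V\setminus\bigcup_{\alpha\in\Phi^+,k\in\mathbb{Z}}\{x:\langle x,\alpha^\vee\rangle=k\}$; $A_0=\{x:0<\langle x,\alpha^\vee\rangle<1\ \forall\alpha\in\Phi^+\}$; $\Omega$ is the stabilizer of $A_0$ in $\tilde W$, $\tilde W=W_a\rtimes\Omega$. Bruhat order $\le$ on $\tilde W$: that of the Coxeter group $W_a$ (simple reflections = reflections in walls of $A_0$), extended by $\tilde w_1\delta\le\tilde w_2\delta\iff\tilde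 w_1\le\tilde w_2$ ($\delta\in\Omega$), different $W_a$-cosets incomparable. $\tilde W^+_1$ is the set of $\tilde w\in\tilde W$ such that $0<\langle x,\alpha^\vee\rangle<1$ for all $x\in\tilde w(A_0)$ and all $\alpha\in\Delta$. *)

theory Defs
  imports "HOL-Analysis.Analysis"
begin

text \<open>
The character lattice X*(T) is modelled as the integer points of
V = real^'n (i.e. X*(T) = Z^n with a chosen basis, V = X*(T) (x) R); the
cocharacter lattice is identified with the integer points as well, the perfect
pairing being the standard inner product.  Roots are elements of Phi, the coroot
map is cor.  Elements of the extended affine Weyl group are represented by
the affine maps of V through which they act (the action is faithful).
\<close>

definition charlat :: "(real^'n) set" where
  "charlat = {x. \<forall>i. x $ i \<in> \<int>}"

definition refl :: "real^'n \<Rightarrow> real^'n \<Rightarrow> real^'n \<Rightarrow> real^'n" where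
  "refl a av x = x - (x \<bullet> av) *\<^sub>R a"

definition root_datum :: "(real^'n) set \<Rightarrow> (real^'n \<Rightarrow> real^'n) \<Rightarrow> bool" where
  "root_datum Phi cor \<longleftrightarrow>
     finite Phi \<and> Phi \<subseteq> charlat \<and> cor ` Phi \<subseteq> charlat \<and> inj_on cor Phi \<and>
     (\<forall>a\<in>Phi. a \<bullet> cor a = 2) \<and>
     (\<forall>a\<in>Phi. \<forall>b\<in>Phi. refl a (cor a) b \<in> Phi \<and> refl (cor a) a (cor b) \<in> cor ` Phi) \<and>
     (\<forall>a\<in>Phi. \<forall>c::real. c *\<^sub>R a \<in> Phi \<longrightarrow> c = 1 \<or> c = -1)"

text \<open>Positive system determined by the Borel B: the roots positive for a
generic linear functional.\<close>
definition positive_system :: "(real^'n) set \<Rightarrow> (real^'n) set \<Rightarrow> bool" where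
  "positive_system Phi Pos \<longleftrightarrow>
     (\<exists>f::real^'n. (\<forall>a\<in>Phi. f \<bullet> a \<noteq> 0) \<and> Pos = {a\<in>Phi. f \<bullet> a > 0})"

definition simple_roots :: "(real^'n) set \<Rightarrow> (real^'n) set" where
  "simple_roots Pos = {a\<in>Pos. \<not> (\<exists>b\<in>Pos. \<exists>c\<in>Pos. a = b + c)}"

definition dominant :: "(real^'n) set \<Rightarrow> (real^'n \<Rightarrow> real^'n) \<Rightarrow> real^'n \<Rightarrow> bool" where
  "dominant Pos cor l \<longleftrightarrow> (\<forall>a\<in>simple_roots Pos. l \<bullet> cor a \<ge> 0)"

definition X0 :: "(real^'n) set \<Rightarrow> (real^'n \<Rightarrow> real^'n) \<Rightarrow> (real^'n) set" where
  "X0 Pos cor = {l \<in> charlat. \<forall>a\<in>simple_roots Pos. l \<bullet> cor a = 0}"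

inductive_set weyl :: "(real^'n) set \<Rightarrow> (real^'n \<Rightarrow> real^'n) \<Rightarrow> (real^'n \<Rightarrow> real^'n) set"
  for Phi cor where
  weyl_id: "id \<in> weyl Phi cor"
| weyl_step: "a \<in> Phi \<Longrightarrow> w \<in> weyl Phi cor \<Longrightarrow> refl a (cor a) \<circ> w \<in> weyl Phi cor"

definition transl :: "real^'n \<Rightarrow> real^'n \<Rightarrow> real^'n" where
  "transl v = (\<lambda>x. x + v)"

definition ext_weyl :: "(real^'n) set \<Rightarrow> (real^'n \<Rightarrow> real^'n) \<Rightarrow> (real^'n \<Rightarrow> real^'n) set" where
  "ext_weyl Phi cor = {transl v \<circ> w | v w. v \<in> charlat \<and> w \<in> weyl Phi cor}"

definition base_alcove :: "(real^'n) set \<Rightarrow> (real^'n \<Rightarrow> real^'n) \<Rightarrow> (real^'n) set" where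
  "base_alcove Pos cor = {x. \<forall>a\<in>Pos. 0 < x \<bullet> cor a \<and> x \<bullet> cor a < 1}"

definition separates :: "real^'n \<Rightarrow> int \<Rightarrow> (real^'n) set \<Rightarrow> (real^'n) set \<Rightarrow> bool" where
  "separates av k A B \<longleftrightarrow>
     (\<exists>x\<in>A. \<exists>y\<in>B. (x \<bullet> av - of_int k) * (y \<bullet> av - of_int k) < 0)"

text \<open>Length: number of affine root hyperplanes separating A_0 and w(A_0)
(this is the Coxeter length on W_a, extended to the extended group by
l(w delta) = l(w)).\<close>
definition alen :: "(real^'n) set \<Rightarrow> (real^'n \<Rightarrow> real^'n) \<Rightarrow> (real^'n \<Rightarrow> real^'n) \<Rightarrow> nat" where
  "alen Pos cor w = card {(a, k). a \<in> Pos \<and>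
       separates (cor a) k (base_alcove Pos cor) (w ` base_alcove Pos cor)}"

definition aff_refl :: "real^'n \<Rightarrow> real^'n \<Rightarrow> int \<Rightarrow> real^'n \<Rightarrow> real^'n" where
  "aff_refl a av k x = x - (x \<bullet> av - of_int k) *\<^sub>R a"

text \<open>On W_a delta this is
the Bruhat order of W_a transported by delta; distinct W_a-cosets are incomparable.\<close>
definition bruhat_step :: "(real^'n) set \<Rightarrow> (real^'n \<Rightarrow> real^'n)
     \<Rightarrow> (real^'n \<Rightarrow> real^'n) \<Rightarrow> (real^'n \<Rightarrow> real^'n) \<Rightarrow> bool" where
  "bruhat_step Pos cor u v \<longleftrightarrow>
     (\<exists>a\<in>Pos. \<exists>k::int. v = aff_refl a (cor a) k \<circ> u \<and> alen Pos cor u < alen Pos cor v)"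

definition bruhat_le :: "(real^'n) set \<Rightarrow> (real^'n \<Rightarrow> real^'n)
     \<Rightarrow> (real^'n \<Rightarrow> real^'n) \<Rightarrow> (real^'n \<Rightarrow> real^'n) \<Rightarrow> bool" where
  "bruhat_le Pos cor = (bruhat_step Pos cor)\<^sup>*\<^sup>*"

definition w0 :: "(real^'n) set \<Rightarrow> (real^'n \<Rightarrow> real^'n) \<Rightarrow> (real^'n) set \<Rightarrow> real^'n \<Rightarrow> real^'n" where
  "w0 Phi cor Pos = (ARG_MAX (alen Pos cor) w. w \<in> weyl Phi cor)"

definition W1plus :: "(real^'n) set \<Rightarrow> (real^'n \<Rightarrow> real^'n) \<Rightarrow> (real^'n) set
     \<Rightarrow> (real^'n \<Rightarrow> real^'n) set" where
  "W1plus Phi cor Pos = {w \<in> ext_weyl Phi cor.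
      \<forall>x\<in>w ` base_alcove Pos cor. \<forall>a\<in>simple_roots Pos. 0 < x \<bullet> cor a \<and> x \<bullet> cor a < 1}"

end

theory Submission
  imports Defs
begin

(* Put y = w0 t_l w and y' = w0 t_l w'.  Both map the base alcove A0 into the antidominant
   chamber: for each positive root a, y(A0) lies in a strip m_a < <x, a^vee> < m_a + 1 with
   m_a < 0, and the length of y is the sum of the |m_a|.  Translation by nu shifts m_a by
   <nu, a^vee>, so, all indices being negative, l(t_nu y) + l(t_-nu y') >= l(y) + l(y').
   Since u <= v in the Bruhat order forces u = v or l(u) < l(v), the two hypotheses give
   t_nu y = y'.  Hence w0 (w'(x) - w(x)) = nu for all x, so w' - w is a constant mu in X*(T);
   as w and w' both lie in W~^+_1, |<mu, alpha^vee>| < 1 for simple alpha, so mu is in X^0(T),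
   w0 fixes mu, and nu = mu.
   The root system facts this needs (simple reflections permute the other positive roots, w0
   is antidominant, the length of a Weyl group element counts its inversions) are derived from
   the root datum axioms, with the reflection-invariant semidefinite form B standing in for a
   Weyl-group-invariant inner product. *)

lemma charlat_inner_Ints: "x \<in> charlat \<Longrightarrow> y \<in> charlat \<Longrightarrow> x \<bullet> y \<in> \<int>"
  unfolding charlat_def inner_vec_def by (auto intro: Ints_mult)

lemma charlat_add: "x \<in> charlat \<Longrightarrow> y \<in> charlat \<Longrightarrow> x + y \<in> charlat"
  and charlat_diff: "x \<in> charlat \<Longrightarrow> y \<in> charlat \<Longrightarrow> x - y \<in> charlat"
  and charlat_scaleR: "x \<in> charlat \<Longrightarrow> c \<in> \<int> \<Longrightarrow> c *\<^sub>R x \<in> charlat"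
  unfolding charlat_def by auto

lemma of_int_floor_Ints: "(x::real) \<in> \<int> \<Longrightarrow> of_int \<lfloor>x\<rfloor> = x"
  by (metis Ints_cases floor_of_int)

definition pairing_form :: "('a::real_inner) set \<Rightarrow> 'a \<Rightarrow> 'a \<Rightarrow> real" where
  "pairing_form D x y = (\<Sum>d\<in>D. (x \<bullet> d) * (y \<bullet> d))"

lemma pairing_form_commute: "pairing_form D x y = pairing_form D y x"
  unfolding pairing_form_def by (simp add: mult.commute)

lemma pairing_form_adjoint_invariant:
  assumes "\<And>x y. R x \<bullet> y = x \<bullet> R' y" and "bij_betw R' D D"
  shows "pairing_form D (R x) (R y) = pairing_form D x y"
proof -
  have "pairing_form D (R x) (R y) = (\<Sum>d\<in>D. (x \<bullet> R' d) * (y \<bullet> R' d))"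
    unfolding pairing_form_def assms(1) ..
  also have "\<dots> = pairing_form D x y"
    unfolding pairing_form_def by (rule sum.reindex_bij_betw[OF assms(2)])
  finally show ?thesis .
qed

lemma pairing_form_nonneg: "0 \<le> pairing_form D x x"
  unfolding pairing_form_def by (auto intro!: sum_nonneg)

lemma square_le_pairing_form: "finite D \<Longrightarrow> d \<in> D \<Longrightarrow> (x \<bullet> d)\<^sup>2 \<le> pairing_form D x x"
  unfolding pairing_form_def power2_eq_square by (rule member_le_sum) auto

lemma pairing_form_eq_0D: "finite D \<Longrightarrow> pairing_form D x x = 0 \<Longrightarrow> d \<in> D \<Longrightarrow> x \<bullet> d = 0"
  unfolding pairing_form_def using sum_nonneg_eq_0_iff[of D "\<lambda>d. (x \<bullet> d) * (x \<bullet> d)"] by auto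

lemma pairing_form_sum_right:
  "finite S \<Longrightarrow> pairing_form D x (\<Sum>i\<in>S. r i *\<^sub>R v i) = (\<Sum>i\<in>S. r i * pairing_form D x (v i))"
  unfolding pairing_form_def
  by (simp add: inner_sum_left sum_distrib_left sum_distrib_right mult_ac sum.swap[of _ S])

lemma pairing_form_diff_scaleR:
  "pairing_form D (x - t *\<^sub>R y) (x - t *\<^sub>R y)
     = pairing_form D x x - 2 * t * pairing_form D x y + t\<^sup>2 * pairing_form D y y"
  unfolding pairing_form_def
  by (simp add: power2_eq_square algebra_simps sum.distrib sum_subtractf sum_distrib_left)

lemma strip_product_neg_iff:
  fixes X Y :: real and m k :: int
  assumes "0 < X" "X < 1" "of_int m < Y" "Y < of_int m + 1"
  shows "(X - of_int k) * (Y - of_int k) < 0 \<longleftrightarrow> (1 \<le> k \<and> k \<le> m) \<or> (m < k \<and> k \<le> 0)"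
proof (cases "1 \<le> k")
  case True
  then have "X - of_int k < 0" using assms by linarith
  moreover have "Y - of_int k > 0 \<longleftrightarrow> k \<le> m" using assms by linarith
  ultimately show ?thesis using True by (auto simp: mult_less_0_iff)
next
  case False
  then have "X - of_int k > 0" using assms by linarith
  moreover have "Y - of_int k < 0 \<longleftrightarrow> m < k" using assms by linarith
  ultimately show ?thesis using False by (auto simp: mult_less_0_iff)
qed

lemma strip_crossings_eq:
  "{k::int. (1 \<le> k \<and> k \<le> m) \<or> (m < k \<and> k \<le> 0)} = (if m \<ge> 0 then {1..m} else {m + 1..0})"
  by auto

lemma bruhat_le_alen: "bruhat_le Pos cor u v \<Longrightarrow> u = v \<or> alen Pos cor u < alen Pos cor v"
  unfolding bruhat_le_def
proof (induction rule: rtranclp_induct)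
  case (step y z)
  then show ?case unfolding bruhat_step_def by auto
qed simp

locale positive_root_datum =
  fixes Phi Pos :: "(real^'n) set" and cor :: "real^'n \<Rightarrow> real^'n" and f :: "real^'n"
  assumes root_datum: "root_datum Phi cor"
    and f_regular: "\<forall>a\<in>Phi. f \<bullet> a \<noteq> 0"
    and Pos_eq: "Pos = {a\<in>Phi. f \<bullet> a > 0}"
begin

abbreviation s :: "real^'n \<Rightarrow> real^'n \<Rightarrow> real^'n" where "s a \<equiv> refl a (cor a)"
abbreviation s_dual :: "real^'n \<Rightarrow> real^'n \<Rightarrow> real^'n" where "s_dual a \<equiv> refl (cor a) a"
abbreviation Sr :: "(real^'n) set" where "Sr \<equiv> simple_roots Pos"
abbreviation A0 :: "(real^'n) set" where "A0 \<equiv> base_alcove Pos cor"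
abbreviation W :: "(real^'n \<Rightarrow> real^'n) set" where "W \<equiv> weyl Phi cor"

lemma finite_Phi: "finite Phi"
  and root_charlat: "a \<in> Phi \<Longrightarrow> a \<in> charlat"
  and coroot_charlat: "a \<in> Phi \<Longrightarrow> cor a \<in> charlat"
  and root_coroot: "a \<in> Phi \<Longrightarrow> a \<bullet> cor a = 2"
  and s_root: "a \<in> Phi \<Longrightarrow> b \<in> Phi \<Longrightarrow> s a b \<in> Phi"
  and s_dual_coroot: "a \<in> Phi \<Longrightarrow> b \<in> Phi \<Longrightarrow> s_dual a (cor b) \<in> cor ` Phi"
  and root_multiple: "a \<in> Phi \<Longrightarrow> c *\<^sub>R a \<in> Phi \<Longrightarrow> c = 1 \<or> c = -1"
  using root_datum unfolding root_datum_def by auto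

lemma finite_Pos: "finite Pos" and Pos_subset: "Pos \<subseteq> Phi" and Pos_f: "a \<in> Pos \<Longrightarrow> f \<bullet> a > 0"
  using finite_Phi Pos_eq by auto

lemma Sr_subset: "Sr \<subseteq> Pos" and finite_Sr: "finite Sr"
  unfolding simple_roots_def using finite_Pos by auto

lemma s_apply: "s a x = x - (x \<bullet> cor a) *\<^sub>R a"
  by (simp add: refl_def)

lemma s_adjoint: "s a x \<bullet> y = x \<bullet> s_dual a y"
  by (simp add: refl_def algebra_simps inner_commute)

lemma s_self: "a \<in> Phi \<Longrightarrow> s a a = - a"
  and s_dual_self: "a \<in> Phi \<Longrightarrow> s_dual a (cor a) = - cor a"
  and s_s: "a \<in> Phi \<Longrightarrow> s a (s a x) = x"
  and s_dual_s_dual: "a \<in> Phi \<Longrightarrow> s_dual a (s_dual a y) = y"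
  using root_coroot[of a]
  by (simp_all add: refl_def scaleR_2 algebra_simps inner_commute)

lemma root_nonzero: "a \<in> Phi \<Longrightarrow> a \<noteq> 0"
  using root_coroot by force

lemma uminus_root: "a \<in> Phi \<Longrightarrow> - a \<in> Phi"
  using s_self s_root by metis

lemma root_cases: "a \<in> Phi \<Longrightarrow> a \<in> Pos \<or> - a \<in> Pos"
  using f_regular uminus_root Pos_eq by force

lemma uminus_Pos: "a \<in> Pos \<Longrightarrow> - a \<notin> Pos"
  using Pos_eq by auto

lemma s_charlat: "a \<in> Phi \<Longrightarrow> x \<in> charlat \<Longrightarrow> s a x \<in> charlat"
  unfolding s_apply
  by (intro charlat_diff charlat_scaleR charlat_inner_Ints) (auto simp: root_charlat coroot_charlat)

lemma bij_betw_s_dual: "a \<in> Phi \<Longrightarrow> bij_betw (s_dual a) (cor ` Phi) (cor ` Phi)"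
  by (rule bij_betw_byWitness[where f'="s_dual a"]) (auto simp: s_dual_s_dual s_dual_coroot)

text \<open>B is only semidefinite; its radical is dealt with in radical_vector_zero.\<close>
definition B :: "real^'n \<Rightarrow> real^'n \<Rightarrow> real" where
  "B = pairing_form (cor ` Phi)"

lemma B_s: "a \<in> Phi \<Longrightarrow> B (s a x) (s a y) = B x y"
  unfolding B_def by (rule pairing_form_adjoint_invariant[OF s_adjoint bij_betw_s_dual])

lemma B_root_ge: "a \<in> Phi \<Longrightarrow> B a a \<ge> 4"
  using square_le_pairing_form[of "cor ` Phi" "cor a" a] finite_Phi root_coroot[of a]
  by (simp add: B_def)

lemma coroot_B: "a \<in> Phi \<Longrightarrow> (x \<bullet> cor a) * B a a = 2 * B x a"
proof -
  assume a: "a \<in> Phi"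
  have "B (s a x) (- a) = B x a"
    using B_s[OF a, of x a] by (simp only: s_self[OF a])
  then show ?thesis
    unfolding B_def pairing_form_def s_apply
    by (simp add: sum_subtractf algebra_simps sum_distrib_left sum_negf)
qed

lemma coroot_s: assumes a: "a \<in> Phi" and b: "b \<in> Phi" shows "cor (s a b) = s_dual a (cor b)"
proof -
  have "x \<bullet> cor (s a b) = x \<bullet> s_dual a (cor b)" for x
  proof -
    have "x \<bullet> cor (s a b) * B b b = 2 * B (s a x) b"
      using coroot_B[OF s_root[OF a b], of x] B_s[OF a, of b b] B_s[OF a, of "s a x" b]
      by (simp add: s_s[OF a])
    also have "\<dots> = (s a x \<bullet> cor b) * B b b" using coroot_B[OF b] by simp
    finally show ?thesis using B_root_ge[OF b] s_adjoint by simp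
  qed
  then show ?thesis using vector_eq_ldot by blast
qed

lemma coroot_uminus: "a \<in> Phi \<Longrightarrow> cor (- a) = - cor a"
  using coroot_s[of a a] s_self s_dual_self by simp

lemma pairing_pos_commute:
  assumes a: "a \<in> Phi" and b: "b \<in> Phi" shows "a \<bullet> cor b > 0 \<longleftrightarrow> b \<bullet> cor a > 0"
proof -
  have "B a a > 0" "B b b > 0" using B_root_ge a b by force+
  moreover have "a \<bullet> cor b = 2 * B a b / B b b"
    using coroot_B[OF b, of a] calculation by (simp add: field_simps)
  moreover have "b \<bullet> cor a = 2 * B a b / B a a"
    using coroot_B[OF a, of b] calculation pairing_form_commute[of _ a b]
    by (simp add: B_def field_simps)
  ultimately show ?thesis by (simp add: zero_less_divide_iff)
qed

lemma Pos_simple_expansion: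
  assumes "a \<in> Pos" shows "\<exists>n::real^'n \<Rightarrow> nat. a = (\<Sum>\<alpha>\<in>Sr. real (n \<alpha>) *\<^sub>R \<alpha>)"
  using assms
proof (induction "card {b\<in>Pos. f \<bullet> b < f \<bullet> a}" arbitrary: a rule: less_induct)
  case less
  show ?case
  proof (cases "a \<in> Sr")
    case True
    have "(\<Sum>\<alpha>\<in>Sr. real (if \<alpha> = a then 1 else 0) *\<^sub>R \<alpha>) = (\<Sum>\<alpha>\<in>Sr. if \<alpha> = a then \<alpha> else 0)"
      by (rule sum.cong) auto
    also have "\<dots> = a" using True finite_Sr by simp
    finally show ?thesis by (intro exI[of _ "\<lambda>\<alpha>. if \<alpha> = a then 1 else 0"]) simp
  next
    case False
    then obtain b c where bc: "b \<in> Pos" "c \<in> Pos" "a = b + c"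
      using less.prems unfolding simple_roots_def by auto
    have fb: "f \<bullet> b < f \<bullet> a" and fc: "f \<bullet> c < f \<bullet> a"
      using bc Pos_f[of b] Pos_f[of c] by (simp_all add: inner_add_right)
    have "card {d\<in>Pos. f \<bullet> d < f \<bullet> b} < card {d\<in>Pos. f \<bullet> d < f \<bullet> a}"
      by (rule psubset_card_mono) (use finite_Pos fb bc in auto)
    then obtain nb where nb: "b = (\<Sum>\<alpha>\<in>Sr. real (nb \<alpha>) *\<^sub>R \<alpha>)" using less.hyps bc by blast
    have "card {d\<in>Pos. f \<bullet> d < f \<bullet> c} < card {d\<in>Pos. f \<bullet> d < f \<bullet> a}"
      by (rule psubset_card_mono) (use finite_Pos fc bc in auto)
    then obtain nc where nc: "c = (\<Sum>\<alpha>\<in>Sr. real (nc \<alpha>) *\<^sub>R \<alpha>)" using less.hyps bc by blast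
    have "a = (\<Sum>\<alpha>\<in>Sr. real (nb \<alpha> + nc \<alpha>) *\<^sub>R \<alpha>)"
      unfolding bc(3) nb nc by (simp add: scaleR_add_left sum.distrib)
    then show ?thesis by (intro exI[of _ "\<lambda>\<alpha>. nb \<alpha> + nc \<alpha>"])
  qed
qed

lemma coroot_simple_expansion:
  assumes a: "a \<in> Pos"
  shows "\<exists>c. (\<forall>\<alpha>\<in>Sr. c \<alpha> \<ge> 0) \<and> (\<exists>\<alpha>\<in>Sr. c \<alpha> > 0) \<and>
    (\<forall>x. x \<bullet> cor a = (\<Sum>\<alpha>\<in>Sr. c \<alpha> * (x \<bullet> cor \<alpha>)))"
proof -
  obtain n where n: "a = (\<Sum>\<alpha>\<in>Sr. real (n \<alpha>) *\<^sub>R \<alpha>)" using Pos_simple_expansion[OF a] by blast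
  have aPhi: "a \<in> Phi" using a Pos_subset by auto
  have Sr_Phi: "\<alpha> \<in> Sr \<Longrightarrow> \<alpha> \<in> Phi" for \<alpha> using Sr_subset Pos_subset by auto
  have Ba: "B a a > 0" using B_root_ge[OF aPhi] by simp
  have B_pos: "B \<alpha> \<alpha> > 0" if "\<alpha> \<in> Sr" for \<alpha> using B_root_ge Sr_Phi[OF that] by force
  define c where "c \<alpha> = real (n \<alpha>) * B \<alpha> \<alpha> / B a a" for \<alpha>
  have "c \<alpha> \<ge> 0" if "\<alpha> \<in> Sr" for \<alpha>
    unfolding c_def by (intro divide_nonneg_pos mult_nonneg_nonneg) (use B_pos[OF that] Ba in auto)
  then have "\<forall>\<alpha>\<in>Sr. c \<alpha> \<ge> 0" by blast
  moreover have "\<exists>\<alpha>\<in>Sr. c \<alpha> > 0"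
  proof (rule ccontr)
    assume "\<not> ?thesis"
    moreover have "c \<alpha> > 0" if "\<alpha> \<in> Sr" "n \<alpha> \<noteq> 0" for \<alpha>
      unfolding c_def by (intro divide_pos_pos mult_pos_pos) (use B_pos[OF that(1)] Ba that(2) in auto)
    ultimately have "\<forall>\<alpha>\<in>Sr. n \<alpha> = 0" by blast
    then have "a = 0" unfolding n by simp
    then show False using root_nonzero aPhi by simp
  qed
  moreover have "x \<bullet> cor a = (\<Sum>\<alpha>\<in>Sr. c \<alpha> * (x \<bullet> cor \<alpha>))" for x
  proof -
    have "x \<bullet> cor a * B a a = 2 * B x a" by (rule coroot_B[OF aPhi])
    also have "B x a = (\<Sum>\<alpha>\<in>Sr. real (n \<alpha>) * B x \<alpha>)"
      unfolding B_def by (subst n) (rule pairing_form_sum_right[OF finite_Sr])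
    also have "\<dots> = (\<Sum>\<alpha>\<in>Sr. real (n \<alpha>) * ((x \<bullet> cor \<alpha>) * B \<alpha> \<alpha> / 2))"
      by (rule sum.cong) (use coroot_B Sr_Phi in \<open>auto simp: field_simps\<close>)
    finally have "x \<bullet> cor a = (\<Sum>\<alpha>\<in>Sr. real (n \<alpha>) * ((x \<bullet> cor \<alpha>) * B \<alpha> \<alpha>)) / B a a"
      using Ba by (simp add: sum_distrib_left eq_divide_eq)
    also have "\<dots> = (\<Sum>\<alpha>\<in>Sr. c \<alpha> * (x \<bullet> cor \<alpha>))"
      unfolding c_def sum_divide_distrib by (rule sum.cong) auto
    finally show ?thesis .
  qed
  ultimately show ?thesis by blast
qed

lemma coroot_pos_of_simple:
  assumes "a \<in> Pos" "\<forall>\<alpha>\<in>Sr. x \<bullet> cor \<alpha> > 0" shows "x \<bullet> cor a > 0"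
proof -
  obtain c where c: "\<forall>\<alpha>\<in>Sr. c \<alpha> \<ge> 0" "\<exists>\<alpha>\<in>Sr. c \<alpha> > 0"
    and xa: "\<forall>x. x \<bullet> cor a = (\<Sum>\<alpha>\<in>Sr. c \<alpha> * (x \<bullet> cor \<alpha>))"
    using coroot_simple_expansion[OF assms(1)] by blast
  obtain \<beta> where \<beta>: "\<beta> \<in> Sr" "c \<beta> > 0" using c(2) by blast
  have "0 < c \<beta> * (x \<bullet> cor \<beta>)" using \<beta> assms(2) by simp
  also have "\<dots> \<le> (\<Sum>\<alpha>\<in>Sr. c \<alpha> * (x \<bullet> cor \<alpha>))"
    by (rule member_le_sum) (use \<beta> finite_Sr c(1) assms(2) less_imp_le in auto)
  finally show ?thesis unfolding xa[rule_format] .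
qed

lemma coroot_nonpos_of_simple:
  assumes "a \<in> Pos" "\<forall>\<alpha>\<in>Sr. x \<bullet> cor \<alpha> \<le> 0" shows "x \<bullet> cor a \<le> 0"
proof -
  obtain c where c: "\<forall>\<alpha>\<in>Sr. c \<alpha> \<ge> 0"
    and xa: "\<forall>x. x \<bullet> cor a = (\<Sum>\<alpha>\<in>Sr. c \<alpha> * (x \<bullet> cor \<alpha>))"
    using coroot_simple_expansion[OF assms(1)] by blast
  show ?thesis unfolding xa[rule_format] by (rule sum_nonpos) (use c(1) assms(2) mult_nonneg_nonpos in auto)
qed

lemma coroot_zero_of_simple:
  assumes "a \<in> Pos" "\<forall>\<alpha>\<in>Sr. x \<bullet> cor \<alpha> = 0" shows "x \<bullet> cor a = 0"
proof -
  obtain c where xa: "\<forall>x. x \<bullet> cor a = (\<Sum>\<alpha>\<in>Sr. c \<alpha> * (x \<bullet> cor \<alpha>))"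
    using coroot_simple_expansion[OF assms(1)] by blast
  show ?thesis unfolding xa[rule_format] using assms(2) by simp
qed

lemma simple_root_diff_notin: assumes "\<alpha> \<in> Sr" "\<beta> \<in> Sr" shows "\<alpha> - \<beta> \<notin> Phi"
proof
  assume d: "\<alpha> - \<beta> \<in> Phi"
  have "\<alpha> \<in> Pos" "\<beta> \<in> Pos" using assms Sr_subset by auto
  show False
  proof (cases "\<alpha> - \<beta> \<in> Pos")
    case True
    have "\<alpha> = \<beta> + (\<alpha> - \<beta>)" by simp
    then show False using assms(1) True \<open>\<beta> \<in> Pos\<close> unfolding simple_roots_def by blast
  next
    case False
    then have "\<beta> - \<alpha> \<in> Pos" using root_cases[OF d] by simp
    moreover have "\<beta> = \<alpha> + (\<beta> - \<alpha>)" by simp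
    ultimately show False using assms(2) \<open>\<alpha> \<in> Pos\<close> unfolding simple_roots_def by blast
  qed
qed

lemma simple_pairing_ne_1: assumes "\<alpha> \<in> Sr" "\<beta> \<in> Sr" shows "\<alpha> \<bullet> cor \<beta> \<noteq> 1"
proof
  assume "\<alpha> \<bullet> cor \<beta> = 1"
  then have "s \<beta> \<alpha> = \<alpha> - \<beta>" by (simp add: s_apply)
  moreover have "s \<beta> \<alpha> \<in> Phi" using s_root assms Sr_subset Pos_subset by blast
  ultimately show False using simple_root_diff_notin[OF assms] by simp
qed

text \<open>Otherwise s \<alpha> \<circ> s \<beta> would act on the line \<beta> + \<real> P as translation by
  (\<beta> \<bullet> cor \<alpha>) P, producing infinitely many roots.\<close>
lemma radical_vector_zero:
  assumes \<alpha>: "\<alpha> \<in> Phi" and \<beta>: "\<beta> \<in> Phi" and P: "\<forall>c\<in>Phi. P \<bullet> cor c = 0"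
    and q: "(\<beta> \<bullet> cor \<alpha>) *\<^sub>R (\<alpha> - P) = 2 *\<^sub>R \<beta>"
  shows "P = 0"
proof (rule ccontr)
  assume "P \<noteq> 0"
  define q where "q = \<beta> \<bullet> cor \<alpha>"
  have "q \<noteq> 0" using q root_nonzero[OF \<beta>] q_def by auto
  define r where "r k = \<beta> + (real k * q) *\<^sub>R P" for k :: nat
  have "r k \<in> Phi" for k
  proof (induction k)
    case 0 then show ?case using \<beta> by (simp add: r_def)
  next
    case (Suc k)
    have "r k \<bullet> cor \<beta> = 2" using root_coroot[OF \<beta>] P \<beta> by (simp add: r_def inner_add_left)
    then have e1: "s \<beta> (r k) = r k - 2 *\<^sub>R \<beta>" by (simp only: s_apply)
    have e2: "(r k - 2 *\<^sub>R \<beta>) \<bullet> cor \<alpha> = - q"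
      using P \<alpha> by (simp add: r_def inner_add_left inner_diff_left q_def)
    have "s \<alpha> (s \<beta> (r k)) = s \<alpha> (r k - 2 *\<^sub>R \<beta>)" by (simp only: e1)
    also have "\<dots> = (r k - 2 *\<^sub>R \<beta>) - (- q) *\<^sub>R \<alpha>" by (simp only: s_apply e2)
    also have "\<dots> = r (Suc k)"
      using q unfolding q_def[symmetric] r_def by (simp add: algebra_simps)
    finally show ?case using s_root[OF \<alpha> s_root[OF \<beta> Suc.IH]] by simp
  qed
  then have "range r \<subseteq> Phi" by blast
  moreover have "inj r"
    by (rule injI) (use \<open>P \<noteq> 0\<close> \<open>q \<noteq> 0\<close> in \<open>simp add: r_def\<close>)
  then have "infinite (range r)" by (rule range_inj_infinite)
  ultimately show False using finite_Phi finite_subset by blast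
qed

lemma pairing_product_lt_4:
  assumes \<alpha>: "\<alpha> \<in> Phi" and \<beta>: "\<beta> \<in> Phi" and "\<alpha> \<noteq> \<beta>" and p0: "\<alpha> \<bullet> cor \<beta> > 0"
  shows "(\<alpha> \<bullet> cor \<beta>) * (\<beta> \<bullet> cor \<alpha>) < 4"
proof (rule ccontr)
  assume "\<not> ?thesis"
  then have pq: "(\<alpha> \<bullet> cor \<beta>) * (\<beta> \<bullet> cor \<alpha>) \<ge> 4" by simp
  define X where "X = B \<alpha> \<beta>"
  have A: "B \<alpha> \<alpha> > 0" and Bb: "B \<beta> \<beta> > 0" using B_root_ge \<alpha> \<beta> by force+
  have hp: "(\<alpha> \<bullet> cor \<beta>) * B \<beta> \<beta> = 2 * X" using coroot_B[OF \<beta>] X_def by simp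
  have hq: "(\<beta> \<bullet> cor \<alpha>) * B \<alpha> \<alpha> = 2 * X"
    using coroot_B[OF \<alpha>] X_def pairing_form_commute by (simp add: B_def)
  have "4 * (B \<alpha> \<alpha> * B \<beta> \<beta>) \<le> ((\<alpha> \<bullet> cor \<beta>) * (\<beta> \<bullet> cor \<alpha>)) * (B \<alpha> \<alpha> * B \<beta> \<beta>)"
    using pq A Bb by (simp add: mult_right_mono)
  also have "\<dots> = ((\<alpha> \<bullet> cor \<beta>) * B \<beta> \<beta>) * ((\<beta> \<bullet> cor \<alpha>) * B \<alpha> \<alpha>)" by (simp only: ac_simps)
  also have "\<dots> = 4 * X\<^sup>2" unfolding hp hq by (simp add: power2_eq_square)
  finally have XAB: "B \<alpha> \<alpha> * B \<beta> \<beta> \<le> X\<^sup>2" by simp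
  define t where "t = X / B \<beta> \<beta>"
  define P where "P = \<alpha> - t *\<^sub>R \<beta>"
  have "2 * X > 0" using hp p0 Bb by (metis mult_pos_pos)
  then have "t > 0" using Bb by (simp add: t_def)
  have "B P P = B \<alpha> \<alpha> - 2 * t * X + t\<^sup>2 * B \<beta> \<beta>"
    unfolding P_def B_def X_def by (rule pairing_form_diff_scaleR)
  also have "\<dots> = B \<alpha> \<alpha> - X\<^sup>2 / B \<beta> \<beta>"
    unfolding t_def using Bb by (simp add: field_simps power2_eq_square)
  also have "\<dots> \<le> 0" using XAB Bb by (simp add: field_simps)
  finally have "B P P \<le> 0" .
  then have "B P P = 0" using pairing_form_nonneg[of _ P] by (simp add: B_def order_antisym)
  then have P: "\<forall>c\<in>Phi. P \<bullet> cor c = 0"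
    using pairing_form_eq_0D[of "cor ` Phi" P] finite_Phi by (simp add: B_def)
  then have "(\<beta> \<bullet> cor \<alpha>) * t = 2"
    using \<alpha> root_coroot[OF \<alpha>] unfolding P_def by (simp add: inner_diff_left mult.commute)
  then have "(\<beta> \<bullet> cor \<alpha>) *\<^sub>R (\<alpha> - P) = 2 *\<^sub>R \<beta>" by (simp add: P_def)
  then have "P = 0" using radical_vector_zero[OF \<alpha> \<beta> P] by simp
  then have "\<alpha> = t *\<^sub>R \<beta>" by (simp add: P_def)
  then have "t = 1" using root_multiple[OF \<beta>] \<alpha> \<open>t > 0\<close> by force
  then show False using \<open>\<alpha> = t *\<^sub>R \<beta>\<close> \<open>\<alpha> \<noteq> \<beta>\<close> by simp
qed

lemma simple_roots_obtuse:
  assumes "\<alpha> \<in> Sr" "\<beta> \<in> Sr" "\<alpha> \<noteq> \<beta>" shows "\<alpha> \<bullet> cor \<beta> \<le> 0"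
proof (rule ccontr)
  assume "\<not> ?thesis"
  then have p: "\<alpha> \<bullet> cor \<beta> > 0" by simp
  have \<alpha>: "\<alpha> \<in> Phi" and \<beta>: "\<beta> \<in> Phi" using assms Sr_subset Pos_subset by auto
  have q: "\<beta> \<bullet> cor \<alpha> > 0" using pairing_pos_commute[OF \<alpha> \<beta>] p by simp
  have ge2: "x \<ge> 2" if "x \<in> \<int>" "x > 0" "x \<noteq> 1" for x :: real
    using that by (elim Ints_cases) simp
  have "\<alpha> \<bullet> cor \<beta> \<in> \<int>" "\<beta> \<bullet> cor \<alpha> \<in> \<int>"
    by (simp_all add: charlat_inner_Ints root_charlat coroot_charlat \<alpha> \<beta>)
  then have "\<alpha> \<bullet> cor \<beta> \<ge> 2" "\<beta> \<bullet> cor \<alpha> \<ge> 2"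
    using ge2 p q simple_pairing_ne_1 assms by simp_all
  then have "(\<alpha> \<bullet> cor \<beta>) * (\<beta> \<bullet> cor \<alpha>) \<ge> 2 * 2"
    by (intro mult_mono) simp_all
  then show False using pairing_product_lt_4[OF \<alpha> \<beta> assms(3) p] by simp
qed

lemma simple_combination_multiple:
  assumes \<alpha>: "\<alpha> \<in> Sr" and m: "\<forall>i\<in>Sr. m i \<ge> 0" and sum: "(\<Sum>i\<in>Sr. m i *\<^sub>R i) = k *\<^sub>R \<alpha>"
  shows "\<forall>i\<in>Sr - {\<alpha>}. m i = 0"
proof -
  have \<alpha>Phi: "\<alpha> \<in> Phi" and f\<alpha>: "f \<bullet> \<alpha> > 0" using \<alpha> Sr_subset Pos_subset Pos_f by auto
  have f_Sr: "f \<bullet> i > 0" if "i \<in> Sr" for i using that Sr_subset Pos_f by auto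
  have E: "(k - m \<alpha>) *\<^sub>R \<alpha> = (\<Sum>i\<in>Sr - {\<alpha>}. m i *\<^sub>R i)"
    using sum sum.remove[OF finite_Sr \<alpha>, of "\<lambda>i. m i *\<^sub>R i"] by (simp add: algebra_simps)
  have "2 * (k - m \<alpha>) = ((k - m \<alpha>) *\<^sub>R \<alpha>) \<bullet> cor \<alpha>" using root_coroot[OF \<alpha>Phi] by simp
  also have "\<dots> = (\<Sum>i\<in>Sr - {\<alpha>}. m i * (i \<bullet> cor \<alpha>))" unfolding E by (simp add: inner_sum_left)
  also have "\<dots> \<le> 0"
    by (rule sum_nonpos) (use m simple_roots_obtuse[OF _ \<alpha>] in \<open>auto intro: mult_nonneg_nonpos\<close>)
  finally have "(k - m \<alpha>) * (f \<bullet> \<alpha>) \<le> 0" using f\<alpha> by (simp add: mult_nonpos_nonneg)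
  also have "(k - m \<alpha>) * (f \<bullet> \<alpha>) = (\<Sum>i\<in>Sr - {\<alpha>}. m i * (f \<bullet> i))"
    using arg_cong[OF E, of "\<lambda>v. f \<bullet> v"] by (simp add: inner_sum_right mult.commute)
  finally have "(\<Sum>i\<in>Sr - {\<alpha>}. m i * (f \<bullet> i)) \<le> 0" .
  moreover have nonneg: "\<forall>i\<in>Sr - {\<alpha>}. m i * (f \<bullet> i) \<ge> 0"
    using m f_Sr by (simp add: less_imp_le)
  ultimately have "\<forall>i\<in>Sr - {\<alpha>}. m i * (f \<bullet> i) = 0"
    using sum_nonneg_eq_0_iff[of "Sr - {\<alpha>}"] sum_nonneg[of "Sr - {\<alpha>}"] finite_Sr
    by (metis (no_types, lifting) finite_Diff order_antisym)
  then show ?thesis using f_Sr by fastforce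
qed

lemma s_simple_Pos:
  assumes \<alpha>: "\<alpha> \<in> Sr" and b: "b \<in> Pos" and "b \<noteq> \<alpha>" shows "s \<alpha> b \<in> Pos"
proof (rule ccontr)
  assume "s \<alpha> b \<notin> Pos"
  have \<alpha>Phi: "\<alpha> \<in> Phi" using \<alpha> Sr_subset Pos_subset by auto
  have c: "(b \<bullet> cor \<alpha>) *\<^sub>R \<alpha> - b \<in> Pos"
    using root_cases[OF s_root[OF \<alpha>Phi]] \<open>s \<alpha> b \<notin> Pos\<close> b Pos_subset by (auto simp: s_apply)
  obtain nb nc where nb: "b = (\<Sum>i\<in>Sr. real (nb i) *\<^sub>R i)"
    and nc: "(b \<bullet> cor \<alpha>) *\<^sub>R \<alpha> - b = (\<Sum>i\<in>Sr. real (nc i) *\<^sub>R i)"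
    using Pos_simple_expansion[OF b] Pos_simple_expansion[OF c] by blast
  have "(\<Sum>i\<in>Sr. real (nb i + nc i) *\<^sub>R i) = (\<Sum>i\<in>Sr. real (nb i) *\<^sub>R i) + (\<Sum>i\<in>Sr. real (nc i) *\<^sub>R i)"
    by (simp add: scaleR_add_left sum.distrib)
  also have "\<dots> = (b \<bullet> cor \<alpha>) *\<^sub>R \<alpha>" by (simp only: nb[symmetric] nc[symmetric]) simp
  finally have "\<forall>i\<in>Sr - {\<alpha>}. real (nb i + nc i) = 0"
    by (intro simple_combination_multiple[OF \<alpha>]) auto
  then have "\<forall>i\<in>Sr - {\<alpha>}. nb i = 0" by (simp only: of_nat_eq_0_iff) simp
  then have "(\<Sum>i\<in>Sr - {\<alpha>}. real (nb i) *\<^sub>R i) = 0" by simp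
  then have "b = real (nb \<alpha>) *\<^sub>R \<alpha>"
    using nb sum.remove[OF finite_Sr \<alpha>, of "\<lambda>i. real (nb i) *\<^sub>R i"] by simp
  then have "real (nb \<alpha>) = 1"
    using root_multiple[OF \<alpha>Phi, of "real (nb \<alpha>)"] b Pos_subset by force
  then show False using \<open>b = real (nb \<alpha>) *\<^sub>R \<alpha>\<close> \<open>b \<noteq> \<alpha>\<close> by simp
qed

lemma bij_betw_s_simple: assumes "\<alpha> \<in> Sr" shows "bij_betw (s \<alpha>) (Pos - {\<alpha>}) (Pos - {\<alpha>})"
proof (rule bij_betw_byWitness[where f'="s \<alpha>"])
  have \<alpha>: "\<alpha> \<in> Phi" "\<alpha> \<in> Pos" using assms Sr_subset Pos_subset by auto
  show "\<forall>b\<in>Pos - {\<alpha>}. s \<alpha> (s \<alpha> b) = b" "\<forall>b\<in>Pos - {\<alpha>}. s \<alpha> (s \<alpha> b) = b"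
    using s_s[OF \<alpha>(1)] by simp_all
  have "s \<alpha> b \<noteq> \<alpha>" if "b \<in> Pos" for b
    using that s_s[OF \<alpha>(1), of b] s_self[OF \<alpha>(1)] uminus_Pos[OF \<alpha>(2)] by force
  then show "s \<alpha> ` (Pos - {\<alpha>}) \<subseteq> Pos - {\<alpha>}" "s \<alpha> ` (Pos - {\<alpha>}) \<subseteq> Pos - {\<alpha>}"
    using s_simple_Pos[OF assms] by auto
qed

lemma sum_Pos_coroot_simple:
  assumes "\<alpha> \<in> Sr" shows "(\<Sum>Pos) \<bullet> cor \<alpha> = 2"
proof -
  have \<alpha>: "\<alpha> \<in> Phi" "\<alpha> \<in> Pos" using assms Sr_subset Pos_subset by auto
  have "s \<alpha> (\<Sum>Pos) = (\<Sum>b\<in>Pos. s \<alpha> b)"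
    by (simp add: s_apply sum_subtractf inner_sum_left scaleR_sum_left)
  also have "\<dots> = s \<alpha> \<alpha> + (\<Sum>b\<in>Pos - {\<alpha>}. s \<alpha> b)"
    by (rule sum.remove[OF finite_Pos \<alpha>(2)])
  also have "(\<Sum>b\<in>Pos - {\<alpha>}. s \<alpha> b) = \<Sum>(Pos - {\<alpha>})"
    by (rule sum.reindex_bij_betw[OF bij_betw_s_simple[OF assms]])
  also have "\<dots> = (\<Sum>Pos) - \<alpha>" by (simp add: sum_diff1 finite_Pos \<alpha>(2))
  finally have s_sum: "s \<alpha> (\<Sum>Pos) = - \<alpha> + ((\<Sum>Pos) - \<alpha>)" by (simp only: s_self[OF \<alpha>(1)])
  have "((\<Sum>Pos) \<bullet> cor \<alpha>) *\<^sub>R \<alpha> = (\<Sum>Pos) - s \<alpha> (\<Sum>Pos)" by (simp add: s_apply)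
  also have "\<dots> = 2 *\<^sub>R \<alpha>" unfolding s_sum by (simp add: scaleR_2)
  finally show ?thesis using root_nonzero[OF \<alpha>(1)] by simp
qed

lemma base_alcove_nonempty: "A0 \<noteq> {}"
proof -
  define T where "T = (\<Sum>a\<in>Pos. (\<Sum>Pos) \<bullet> cor a)"
  have pos: "(\<Sum>Pos) \<bullet> cor a > 0" if "a \<in> Pos" for a
    using coroot_pos_of_simple[OF that] sum_Pos_coroot_simple by simp
  then have "T \<ge> 0" unfolding T_def by (simp add: sum_nonneg less_imp_le)
  have "(1 / (1 + T)) *\<^sub>R (\<Sum>Pos) \<in> A0"
    unfolding base_alcove_def
  proof (intro CollectI ballI conjI)
    fix a assume a: "a \<in> Pos"
    have "(\<Sum>Pos) \<bullet> cor a \<le> T" unfolding T_def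
      by (rule member_le_sum) (use a finite_Pos pos less_imp_le in auto)
    then show "(1 / (1 + T)) *\<^sub>R (\<Sum>Pos) \<bullet> cor a < 1" using \<open>T \<ge> 0\<close> by (simp add: field_simps)
    show "0 < (1 / (1 + T)) *\<^sub>R (\<Sum>Pos) \<bullet> cor a" using pos[OF a] \<open>T \<ge> 0\<close> by simp
  qed
  then show ?thesis by blast
qed

lemma weyl_s: "a \<in> Phi \<Longrightarrow> s a \<in> W"
  using weyl_step[OF _ weyl_id, of a Phi cor] by simp

lemma weyl_comp: "u \<in> W \<Longrightarrow> v \<in> W \<Longrightarrow> u \<circ> v \<in> W"
proof (induction rule: weyl.induct)
  case weyl_id then show ?case by simp
next
  case (weyl_step a u)
  have "s a \<circ> (u \<circ> v) \<in> W" by (rule weyl.weyl_step[OF weyl_step(1) weyl_step(3)[OF weyl_step(4)]])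
  then show ?case by (simp only: comp_assoc)
qed

lemma weyl_add: "w \<in> W \<Longrightarrow> w (x + y) = w x + w y"
  by (induction arbitrary: x y rule: weyl.induct) (simp_all add: s_apply inner_add_left scaleR_add_left)

lemma weyl_diff: "w \<in> W \<Longrightarrow> w (x - y) = w x - w y"
  using weyl_add[of w "x - y" y] by (simp add: algebra_simps)

lemma weyl_inj: "w \<in> W \<Longrightarrow> inj w"
proof (induction rule: weyl.induct)
  case weyl_id then show ?case by simp
next
  case (weyl_step a w)
  show ?case by (rule inj_compose[OF _ weyl_step(3)]) (metis inj_onI s_s weyl_step(1))
qed

lemma weyl_charlat: "w \<in> W \<Longrightarrow> x \<in> charlat \<Longrightarrow> w x \<in> charlat"
  by (induction arbitrary: x rule: weyl.induct) (simp_all add: s_charlat)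

lemma weyl_coroot: "w \<in> W \<Longrightarrow> a \<in> Phi \<Longrightarrow> \<exists>b\<in>Phi. \<forall>x. w x \<bullet> cor a = x \<bullet> cor b"
proof (induction arbitrary: a rule: weyl.induct)
  case weyl_id then show ?case by auto
next
  case (weyl_step c w)
  obtain d where d: "d \<in> Phi" "s_dual c (cor a) = cor d" using s_dual_coroot[OF weyl_step(1,4)] by auto
  obtain b where "b \<in> Phi" "\<forall>x. w x \<bullet> cor d = x \<bullet> cor b" using weyl_step(3)[OF d(1)] by auto
  then show ?case using s_adjoint[of c _ "cor a"] d(2) by auto
qed

lemma weyl_fix: "w \<in> W \<Longrightarrow> \<forall>a\<in>Phi. x \<bullet> cor a = 0 \<Longrightarrow> w x = x"
  by (induction rule: weyl.induct) (simp_all add: s_apply)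

lemma base_alcove_coroot:
  assumes "x \<in> A0" "a \<in> Phi"
  shows "a \<in> Pos \<Longrightarrow> 0 < x \<bullet> cor a \<and> x \<bullet> cor a < 1"
    and "a \<notin> Pos \<Longrightarrow> -1 < x \<bullet> cor a \<and> x \<bullet> cor a < 0"
proof -
  show "a \<in> Pos \<Longrightarrow> 0 < x \<bullet> cor a \<and> x \<bullet> cor a < 1" using assms(1) by (simp add: base_alcove_def)
  assume "a \<notin> Pos"
  then have "- a \<in> Pos" using root_cases[OF assms(2)] by simp
  then show "-1 < x \<bullet> cor a \<and> x \<bullet> cor a < 0"
    using assms(1) coroot_uminus[OF uminus_root[OF assms(2)]] by (simp add: base_alcove_def)
qed

lemma weyl_coroot_A0:
  assumes "w \<in> W" "a \<in> Pos"
  shows "(\<forall>x\<in>A0. 0 < w x \<bullet> cor a \<and> w x \<bullet> cor a < 1) \<or> (\<forall>x\<in>A0. -1 < w x \<bullet> cor a \<and> w x \<bullet> cor a < 0)"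
proof -
  obtain b where "b \<in> Phi" "\<forall>x. w x \<bullet> cor a = x \<bullet> cor b"
    using weyl_coroot[OF assms(1)] assms(2) Pos_subset by blast
  then show ?thesis using base_alcove_coroot[of _ b] by (cases "b \<in> Pos") auto
qed

definition in_strips :: "(real^'n \<Rightarrow> real^'n) \<Rightarrow> (real^'n \<Rightarrow> int) \<Rightarrow> bool" where
  "in_strips u m \<longleftrightarrow>
     (\<forall>a\<in>Pos. \<forall>x\<in>A0. of_int (m a) < u x \<bullet> cor a \<and> u x \<bullet> cor a < of_int (m a) + 1)"

lemma separates_in_strips_iff:
  assumes "in_strips u m" "a \<in> Pos"
  shows "separates (cor a) k A0 (u ` A0) \<longleftrightarrow> (1 \<le> k \<and> k \<le> m a) \<or> (m a < k \<and> k \<le> 0)"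
proof -
  obtain x0 where "x0 \<in> A0" using base_alcove_nonempty by auto
  have "(x \<bullet> cor a - of_int k) * (u y \<bullet> cor a - of_int k) < 0 \<longleftrightarrow>
      (1 \<le> k \<and> k \<le> m a) \<or> (m a < k \<and> k \<le> 0)" if "x \<in> A0" "y \<in> A0" for x y
    by (rule strip_product_neg_iff)
      (use assms that in \<open>auto simp: in_strips_def base_alcove_def\<close>)
  then show ?thesis unfolding separates_def using \<open>x0 \<in> A0\<close> by blast
qed

lemma alen_in_strips:
  assumes "in_strips u m" shows "int (alen Pos cor u) = (\<Sum>a\<in>Pos. \<bar>m a\<bar>)"
proof -
  define K where "K a = {k::int. (1 \<le> k \<and> k \<le> m a) \<or> (m a < k \<and> k \<le> 0)}" for a
  have "{(a, k). a \<in> Pos \<and> separates (cor a) k A0 (u ` A0)} = Sigma Pos K"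
    using separates_in_strips_iff[OF assms] by (auto simp: K_def)
  then have "alen Pos cor u = card (Sigma Pos K)" by (simp add: alen_def)
  moreover have "finite (K a)" "int (card (K a)) = \<bar>m a\<bar>" for a
    unfolding K_def strip_crossings_eq by simp_all
  ultimately show ?thesis using finite_Pos by simp
qed

lemma in_strips_transl:
  assumes "in_strips u m" "\<forall>a\<in>Pos. v \<bullet> cor a = of_int (n a)"
  shows "in_strips (transl v \<circ> u) (\<lambda>a. m a + n a)"
  using assms by (simp add: in_strips_def transl_def inner_add_left)

lemma weyl_in_strips:
  assumes "w \<in> W" "x0 \<in> A0"
  shows "in_strips w (\<lambda>a. if w x0 \<bullet> cor a < 0 then -1 else 0)"
  unfolding in_strips_def
proof (intro ballI)
  fix a x assume "a \<in> Pos" "x \<in> A0"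
  then show "of_int (if w x0 \<bullet> cor a < 0 then -1 else 0) < w x \<bullet> cor a \<and>
      w x \<bullet> cor a < of_int (if w x0 \<bullet> cor a < 0 then -1 else 0) + 1"
    using weyl_coroot_A0[OF assms(1)] assms(2) by fastforce
qed

lemma transl_weyl_in_strips:
  assumes "w \<in> W" "v \<in> charlat" obtains m where "in_strips (transl v \<circ> w) m"
proof -
  obtain x0 where "x0 \<in> A0" using base_alcove_nonempty by auto
  have "\<forall>a\<in>Pos. v \<bullet> cor a = of_int \<lfloor>v \<bullet> cor a\<rfloor>"
    using assms(2) coroot_charlat Pos_subset charlat_inner_Ints of_int_floor_Ints by (metis subsetD)
  then have "in_strips (transl v \<circ> w) (\<lambda>a. (if w x0 \<bullet> cor a < 0 then -1 else 0) + \<lfloor>v \<bullet> cor a\<rfloor>)"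
    by (rule in_strips_transl[OF weyl_in_strips[OF assms(1) \<open>x0 \<in> A0\<close>]])
  then show ?thesis by (rule that)
qed

lemma alen_weyl:
  assumes "w \<in> W" "x0 \<in> A0" shows "alen Pos cor w = card {a\<in>Pos. w x0 \<bullet> cor a < 0}"
proof -
  have "int (alen Pos cor w) = (\<Sum>a\<in>Pos. if w x0 \<bullet> cor a < 0 then 1 else 0)"
    using alen_in_strips[OF weyl_in_strips[OF assms]] by (simp add: if_distrib cong: if_cong)
  also have "\<dots> = int (card {a\<in>Pos. w x0 \<bullet> cor a < 0})"
    using sum.inter_filter[OF finite_Pos, of "\<lambda>_. 1::int"] by simp
  finally show ?thesis by simp
qed

lemma alen_s_simple:
  assumes \<alpha>: "\<alpha> \<in> Sr" and w: "w \<in> W" and x0: "x0 \<in> A0" and pos: "w x0 \<bullet> cor \<alpha> > 0"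
  shows "alen Pos cor (s \<alpha> \<circ> w) = Suc (alen Pos cor w)"
proof -
  have \<alpha>Phi: "\<alpha> \<in> Phi" and "\<alpha> \<in> Pos" using \<alpha> Sr_subset Pos_subset by auto
  define N where "N u = {b\<in>Pos. u x0 \<bullet> cor b < 0}" for u :: "real^'n \<Rightarrow> real^'n"
  have val: "(s \<alpha> \<circ> w) x0 \<bullet> cor b = w x0 \<bullet> cor (s \<alpha> b)" if "b \<in> Phi" for b
    using coroot_s[OF \<alpha>Phi that] by (simp add: s_adjoint)
  have "\<alpha> \<in> N (s \<alpha> \<circ> w)"
    using val[OF \<alpha>Phi] pos \<open>\<alpha> \<in> Pos\<close> by (simp add: N_def s_self[OF \<alpha>Phi] coroot_uminus[OF \<alpha>Phi])
  moreover have "b \<in> N (s \<alpha> \<circ> w) \<longleftrightarrow> s \<alpha> b \<in> N w" if "b \<in> Pos - {\<alpha>}" for b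
    using that val s_simple_Pos[OF \<alpha>] Pos_subset by (auto simp: N_def)
  ultimately have N_s: "N (s \<alpha> \<circ> w) = insert \<alpha> {b \<in> Pos - {\<alpha>}. s \<alpha> b \<in> N w}"
    by (auto simp: N_def)
  have perm: "s \<alpha> ` (Pos - {\<alpha>}) = Pos - {\<alpha>}"
    using bij_betw_s_simple[OF \<alpha>] by (simp add: bij_betw_def)
  have "N w \<subseteq> Pos - {\<alpha>}" using pos by (auto simp: N_def)
  then have img: "s \<alpha> ` N w = {b \<in> Pos - {\<alpha>}. s \<alpha> b \<in> N w}"
    using perm s_s[OF \<alpha>Phi] by (auto intro: rev_image_eqI)
  have "card (s \<alpha> ` N w) = card (N w)"
    by (rule card_image) (metis inj_onI s_s[OF \<alpha>Phi])
  moreover have "finite (N w)" by (simp add: N_def finite_Pos)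
  moreover have "\<alpha> \<notin> s \<alpha> ` N w" unfolding img by simp
  ultimately have "card (N (s \<alpha> \<circ> w)) = Suc (card (N w))"
    unfolding N_s img[symmetric] by simp
  then show ?thesis
    unfolding N_def alen_weyl[OF w x0] alen_weyl[OF weyl_comp[OF weyl_s[OF \<alpha>Phi] w] x0] .
qed

lemma w0_weyl: "w0 Phi cor Pos \<in> W"
  and alen_le_w0: "w \<in> W \<Longrightarrow> alen Pos cor w \<le> alen Pos cor (w0 Phi cor Pos)"
proof -
  obtain x0 where "x0 \<in> A0" using base_alcove_nonempty by auto
  have "\<forall>w. w \<in> W \<longrightarrow> alen Pos cor w < Suc (card Pos)"
    using alen_weyl[OF _ \<open>x0 \<in> A0\<close>] card_mono[OF finite_Pos] by (simp add: le_imp_less_Suc)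
  from arg_max_nat_lemma[OF weyl_id this]
  show "w0 Phi cor Pos \<in> W" "w \<in> W \<Longrightarrow> alen Pos cor w \<le> alen Pos cor (w0 Phi cor Pos)"
    unfolding w0_def by auto
qed

lemma w0_antidominant_A0:
  assumes x: "x \<in> A0" and a: "a \<in> Pos" shows "w0 Phi cor Pos x \<bullet> cor a < 0"
proof (rule ccontr)
  assume "\<not> ?thesis"
  then have "w0 Phi cor Pos x \<bullet> cor a > 0" using weyl_coroot_A0[OF w0_weyl a] x by force
  then have "\<not> (\<forall>\<alpha>\<in>Sr. w0 Phi cor Pos x \<bullet> cor \<alpha> \<le> 0)"
    using coroot_nonpos_of_simple[OF a, of "w0 Phi cor Pos x"] by linarith
  then obtain \<alpha> where \<alpha>: "\<alpha> \<in> Sr" "w0 Phi cor Pos x \<bullet> cor \<alpha> > 0" by (auto simp: not_le)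
  then have "alen Pos cor (s \<alpha> \<circ> w0 Phi cor Pos) = Suc (alen Pos cor (w0 Phi cor Pos))"
    using alen_s_simple w0_weyl x by blast
  moreover have "s \<alpha> \<circ> w0 Phi cor Pos \<in> W"
    using \<alpha>(1) Sr_subset Pos_subset weyl_comp[OF weyl_s w0_weyl] by blast
  ultimately show False using alen_le_w0 by fastforce
qed

lemma w0_antidominant:
  assumes "\<forall>\<alpha>\<in>Sr. x \<bullet> cor \<alpha> > 0" and a: "a \<in> Pos" shows "w0 Phi cor Pos x \<bullet> cor a < 0"
proof -
  obtain x0 where x0: "x0 \<in> A0" using base_alcove_nonempty by auto
  obtain b where b: "b \<in> Phi" "\<forall>y. w0 Phi cor Pos y \<bullet> cor a = y \<bullet> cor b"
    using weyl_coroot[OF w0_weyl] a Pos_subset by blast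
  have "b \<notin> Pos" using w0_antidominant_A0[OF x0 a] base_alcove_coroot(1)[OF x0 b(1)] b(2) by force
  then have "x \<bullet> cor (- b) > 0" using coroot_pos_of_simple root_cases[OF b(1)] assms(1) by blast
  then show ?thesis using b coroot_uminus[OF b(1)] by simp
qed

lemma W1plus_antidominant_strips:
  assumes w: "w \<in> W1plus Phi cor Pos" and l: "l \<in> charlat" "dominant Pos cor l"
  obtains m where "in_strips (w0 Phi cor Pos \<circ> transl l \<circ> w) m" "\<forall>a\<in>Pos. m a < 0"
proof -
  let ?w0 = "w0 Phi cor Pos"
  obtain v u where vu: "v \<in> charlat" "u \<in> W" "w = transl v \<circ> u"
    using w unfolding W1plus_def ext_weyl_def by blast
  have "?w0 \<circ> transl l \<circ> w = transl (?w0 (v + l)) \<circ> (?w0 \<circ> u)"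
    using weyl_add[OF w0_weyl] by (auto simp: vu(3) transl_def algebra_simps)
  moreover have "?w0 (v + l) \<in> charlat" using weyl_charlat[OF w0_weyl] charlat_add vu(1) l(1) by blast
  ultimately obtain m where m: "in_strips (?w0 \<circ> transl l \<circ> w) m"
    using transl_weyl_in_strips[OF weyl_comp[OF w0_weyl vu(2)]] by metis
  obtain x0 where x0: "x0 \<in> A0" using base_alcove_nonempty by auto
  have "\<forall>\<alpha>\<in>Sr. (w x0 + l) \<bullet> cor \<alpha> > 0"
    using w x0 l(2) unfolding W1plus_def dominant_def by (auto simp: inner_add_left add_pos_nonneg)
  then have "m a < 0" if "a \<in> Pos" for a
    using m w0_antidominant[of "w x0 + l" a] that x0 unfolding in_strips_def
    by (fastforce simp: transl_def)
  with m that show ?thesis by blast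
qed

text \<open>By alen_in_strips and the triangle inequality, negativity of all strip indices gives
  alen (transl nu \<circ> y1) + alen (transl (- nu) \<circ> y2) \<ge> alen y1 + alen y2.\<close>
lemma bruhat_translation_pair:
  assumes y1: "in_strips y1 m1" and y2: "in_strips y2 m2"
    and neg: "\<forall>a\<in>Pos. m1 a < 0" "\<forall>a\<in>Pos. m2 a < 0" and nu: "nu \<in> charlat"
    and le1: "bruhat_le Pos cor (transl nu \<circ> y1) y2"
    and le2: "bruhat_le Pos cor (transl (- nu) \<circ> y2) y1"
  shows "transl nu \<circ> y1 = y2"
proof (rule ccontr)
  assume ne: "transl nu \<circ> y1 \<noteq> y2"
  define n where "n a = \<lfloor>nu \<bullet> cor a\<rfloor>" for a
  have "nu \<bullet> cor a \<in> \<int>" if "a \<in> Pos" for a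
    using nu coroot_charlat that Pos_subset charlat_inner_Ints by blast
  then have n: "\<forall>a\<in>Pos. nu \<bullet> cor a = of_int (n a)" "\<forall>a\<in>Pos. - nu \<bullet> cor a = of_int (- n a)"
    by (simp_all add: n_def of_int_floor_Ints)
  have "alen Pos cor (transl nu \<circ> y1) < alen Pos cor y2" using bruhat_le_alen[OF le1] ne by simp
  moreover have "alen Pos cor (transl (- nu) \<circ> y2) \<le> alen Pos cor y1"
    using bruhat_le_alen[OF le2] by fastforce
  ultimately have "(\<Sum>a\<in>Pos. \<bar>m1 a + n a\<bar>) + (\<Sum>a\<in>Pos. \<bar>m2 a + - n a\<bar>) < (\<Sum>a\<in>Pos. \<bar>m2 a\<bar>) + (\<Sum>a\<in>Pos. \<bar>m1 a\<bar>)"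
    using alen_in_strips[OF in_strips_transl[OF y1 n(1)]] alen_in_strips[OF in_strips_transl[OF y2 n(2)]]
      alen_in_strips[OF y1] alen_in_strips[OF y2] by linarith
  moreover have "\<bar>m1 a\<bar> + \<bar>m2 a\<bar> \<le> \<bar>m1 a + n a\<bar> + \<bar>m2 a + - n a\<bar>" if "a \<in> Pos" for a
    using neg that by fastforce
  then have "(\<Sum>a\<in>Pos. \<bar>m1 a\<bar>) + (\<Sum>a\<in>Pos. \<bar>m2 a\<bar>) \<le> (\<Sum>a\<in>Pos. \<bar>m1 a + n a\<bar>) + (\<Sum>a\<in>Pos. \<bar>m2 a + - n a\<bar>)"
    unfolding sum.distrib[symmetric] by (rule sum_mono)
  ultimately show False by linarith
qed

lemma W1plus_translation_eq:
  assumes w: "w \<in> W1plus Phi cor Pos" and w': "w' \<in> W1plus Phi cor Pos" and z: "z \<in> W"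
    and eq: "transl nu \<circ> z \<circ> transl l \<circ> w = z \<circ> transl l \<circ> w'"
  shows "nu \<in> X0 Pos cor \<and> w' = transl nu \<circ> w"
proof -
  have z_diff: "z (w' x - w x) = nu" for x
  proof -
    have "z (w' x + l) = z (w x + l) + nu" using fun_cong[OF eq, of x] by (simp add: transl_def)
    moreover have "z (w' x - w x) = z (w' x + l) - z (w x + l)"
      using weyl_diff[OF z, of "w' x + l" "w x + l"] by simp
    ultimately show ?thesis by simp
  qed
  define mu where "mu = w' 0 - w 0"
  have mu: "w' x - w x = mu" for x
    using injD[OF weyl_inj[OF z]] z_diff[of x] z_diff[of 0] by (simp add: mu_def)
  have "mu \<in> charlat"
    using w w' unfolding mu_def W1plus_def ext_weyl_def
    by (auto simp: transl_def weyl_diff[of _ 0 0, simplified] intro!: charlat_diff)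
  have simple: "\<forall>\<alpha>\<in>Sr. mu \<bullet> cor \<alpha> = 0"
  proof
    fix \<alpha> assume \<alpha>: "\<alpha> \<in> Sr"
    obtain x0 where x0: "x0 \<in> A0" using base_alcove_nonempty by auto
    have "mu \<bullet> cor \<alpha> = w' x0 \<bullet> cor \<alpha> - w x0 \<bullet> cor \<alpha>" using mu[of x0] by (metis inner_diff_left)
    then have "\<bar>mu \<bullet> cor \<alpha>\<bar> < 1" using w w' x0 \<alpha> unfolding W1plus_def by force
    moreover have "mu \<bullet> cor \<alpha> \<in> \<int>"
      using \<open>mu \<in> charlat\<close> \<alpha> Sr_subset Pos_subset coroot_charlat charlat_inner_Ints by blast
    ultimately show "mu \<bullet> cor \<alpha> = 0" by (elim Ints_cases) simp
  qed
  have "\<forall>a\<in>Phi. mu \<bullet> cor a = 0"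
    using coroot_zero_of_simple[OF _ simple] root_cases coroot_uminus uminus_root by (metis neg_0_equal_iff_equal inner_minus_right)
  then have "nu = mu" using z_diff[of 0] mu[of 0] weyl_fix[OF z] by simp
  then show ?thesis
    using \<open>mu \<in> charlat\<close> simple mu by (auto simp: X0_def transl_def algebra_simps)
qed

end

theorem mainTheorem4:
  fixes Phi Pos :: "(real^'n) set" and cor :: "real^'n \<Rightarrow> real^'n"
    and w w' :: "real^'n \<Rightarrow> real^'n" and l nu :: "real^'n"
  assumes "root_datum Phi cor" and "positive_system Phi Pos"
    and "w \<in> W1plus Phi cor Pos" and "w' \<in> W1plus Phi cor Pos"
    and "l \<in> charlat" and "dominant Pos cor l" and "nu \<in> charlat"
    and "bruhat_le Pos cor (transl nu \<circ> w0 Phi cor Pos \<circ> transl l \<circ> w)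
                           (w0 Phi cor Pos \<circ> transl l \<circ> w')"
    and "bruhat_le Pos cor (transl (- nu) \<circ> w0 Phi cor Pos \<circ> transl l \<circ> w')
                           (w0 Phi cor Pos \<circ> transl l \<circ> w)"
  shows "nu \<in> X0 Pos cor \<and> w' = transl nu \<circ> w"
proof -
  obtain f where "\<forall>a\<in>Phi. f \<bullet> a \<noteq> 0" "Pos = {a\<in>Phi. f \<bullet> a > 0}"
    using assms(2) unfolding positive_system_def by blast
  then interpret positive_root_datum Phi Pos cor f
    using assms(1) by unfold_locales
  obtain m where m: "in_strips (w0 Phi cor Pos \<circ> transl l \<circ> w) m" "\<forall>a\<in>Pos. m a < 0"
    using W1plus_antidominant_strips[OF assms(3,5,6)] by blast
  obtain m' where m': "in_strips (w0 Phi cor Pos \<circ> transl l \<circ> w') m'" "\<forall>a\<in>Pos. m' a < 0"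
    using W1plus_antidominant_strips[OF assms(4,5,6)] by blast
  have "transl nu \<circ> (w0 Phi cor Pos \<circ> transl l \<circ> w) = w0 Phi cor Pos \<circ> transl l \<circ> w'"
    using bruhat_translation_pair[OF m(1) m'(1) m(2) m'(2) assms(7)] assms(8,9)
    by (simp add: comp_assoc)
  then show ?thesis
    using W1plus_translation_eq[OF assms(3,4) w0_weyl] by (simp add: comp_assoc)
qed

end
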